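(* Let $V_1,V_2$ be Orlicz functions with $V_1(x)/V_2(x)\to\infty$ as $|x|\to\infty$. Let $\widetilde R:=\sup\{m_{V_2}(\nu):\nu\in\mathscr M_1(\mathbb R),\ m_{V_1}(\nu)\le1\}$ and let $R\in[\widetilde R,\infty)$. Let $X_1^{n,V_1}$ be uniformly distributed on $\mathbb B_1^{n,V_1}$. Then for each fixed $k\in\mathbb N$, $$\lim_{\epsilon\to0}\lim_{n\to\infty}d_w\Big(P\big[(X_1^{n,V_1}(1),\dots,X_1^{n,V_1}(k))\in\cdot\,\big|\,X_1^{n,V_1}\in\mathbb B^{n,V_2}_{R+\epsilon}\big],\ \lambda^{(n,k)}_{1,V_1}\Big)=0,$$ where $d_w$ is a metric inducing weak convergence of probability measures on $\mathbb R^k$ and $\lambda^{(n,k)}_{1,V_1}$ is the distribution of the first $k$ coordinates of a random vector uniformly distributed on $\mathbb B_1^{n,V_1}$.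
   Context: An Orlicz function is a convex, symmetric function $V:\mathbb R\to[0,\infty)$ with $V(0)=0$ and $V(x)>0$ for $x\ne0$. $\mathbb B_R^{n,V}:=\{x\in\mathbb R^n:\sum_kV(x_k)\le Rn\}$. $m_V(\nu):=\int V\,d\nu$. *)

theory Defs
  imports "HOL-Probability.Probability"
begin

definition orlicz :: "(real \<Rightarrow> real) \<Rightarrow> bool" where
  "orlicz V \<longleftrightarrow> convex_on UNIV V \<and> (\<forall>x. V (- x) = V x) \<and> V 0 = 0 \<and> (\<forall>x. x \<noteq> 0 \<longrightarrow> V x > 0)"

abbreviation lebR :: "nat \<Rightarrow> (nat \<Rightarrow> real) measure" where
  "lebR n \<equiv> PiM {..<n} (\<lambda>_. lborel)"

definition orlicz_ball :: "nat \<Rightarrow> (real \<Rightarrow> real) \<Rightarrow> real \<Rightarrow> (nat \<Rightarrow> real) set" where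
  "orlicz_ball n V R = {x \<in> {..<n} \<rightarrow>\<^sub>E UNIV. (\<Sum>i<n. V (x i)) \<le> R * real n}"

text \<open>m_V(nu) = integral of V w.r.t. nu (V \<ge> 0, so as a nonnegative integral).\<close>
definition mV :: "(real \<Rightarrow> real) \<Rightarrow> real measure \<Rightarrow> ennreal" where
  "mV V \<nu> = (\<integral>\<^sup>+ x. ennreal (V x) \<partial>\<nu>)"

definition Rtilde :: "(real \<Rightarrow> real) \<Rightarrow> (real \<Rightarrow> real) \<Rightarrow> ennreal" where
  "Rtilde V1 V2 = (SUP \<nu> \<in> {\<nu>. prob_space \<nu> \<and> sets \<nu> = sets (borel :: real measure) \<and> mV V1 \<nu> \<le> 1}. mV V2 \<nu>)"

text \<open>Law of a random vector uniformly distributed on B_R^{n,V} (canonical version: X = id).\<close>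
definition unif_ball :: "nat \<Rightarrow> (real \<Rightarrow> real) \<Rightarrow> real \<Rightarrow> (nat \<Rightarrow> real) measure" where
  "unif_ball n V R = uniform_measure (lebR n) (orlicz_ball n V R)"

definition cond_prob_measure :: "'a measure \<Rightarrow> 'a set \<Rightarrow> 'a measure" where
  "cond_prob_measure P A = density P (\<lambda>x. indicator A x / emeasure P A)"

definition first_coords :: "nat \<Rightarrow> (nat \<Rightarrow> real) measure \<Rightarrow> (nat \<Rightarrow> real) measure" where
  "first_coords k \<mu> = distr \<mu> (lebR k) (\<lambda>x. restrict x {..<k})"

definition distk :: "nat \<Rightarrow> (nat \<Rightarrow> real) \<Rightarrow> (nat \<Rightarrow> real) \<Rightarrow> real" where
  "distk k x y = sqrt (\<Sum>i<k. (x i - y i)^2)"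

text \<open>Levy-Prokhorov metric on probability measures on R^k (metrizes weak convergence).\<close>
definition prokhorov :: "nat \<Rightarrow> (nat \<Rightarrow> real) measure \<Rightarrow> (nat \<Rightarrow> real) measure \<Rightarrow> real" where
  "prokhorov k \<mu> \<nu> = Inf {e. e > 0 \<and> (\<forall>A \<in> sets (lebR k).
      measure \<mu> A \<le> measure \<nu> {y \<in> space (lebR k). \<exists>x\<in>A. distk k x y < e} + e \<and>
      measure \<nu> A \<le> measure \<mu> {y \<in> space (lebR k). \<exists>x\<in>A. distk k x y < e} + e)}"

end

theory Submission
  imports Defs
begin

text \<open>For x in B_1^{n,V1} the empirical measure of its coordinates is a probability measure with
  m_V1 at most 1, so its m_V2, which is (1/n) sum_i V2(x_i), is at most R~ <= R. Hence B_1^{n,V1}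
  lies inside B_{R+eps}^{n,V2}: conditioning on that event changes nothing, and the distance is 0
  for every n and eps.\<close>

lemma orlicz_nonneg: "orlicz V \<Longrightarrow> 0 \<le> V t"
  unfolding orlicz_def by (cases "t = 0") (auto intro: less_imp_le)

lemma orlicz_continuous: "orlicz V \<Longrightarrow> continuous_on UNIV V"
  unfolding orlicz_def by (intro convex_on_continuous) auto

lemma borel_measurable_orlicz: "orlicz V \<Longrightarrow> V \<in> borel_measurable borel"
  by (rule borel_measurable_continuous_onI[OF orlicz_continuous])

lemma orlicz_small_near_zero:
  assumes "orlicz V" "c > 0"
  shows "\<exists>d>0. \<forall>t. \<bar>t\<bar> \<le> d \<longrightarrow> V t \<le> c"
proof -
  have "isCont V 0" and "V 0 = 0"
    using assms(1) orlicz_continuous[OF assms(1)]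
    by (auto simp: orlicz_def continuous_on_eq_continuous_at)
  then obtain d where "d > 0" and d: "\<And>t. \<bar>t\<bar> < d \<Longrightarrow> V t < c"
    using assms(2) unfolding continuous_at_eps_delta dist_real_def by (force simp: abs_less_iff)
  then show ?thesis
    by (intro exI[of _ "d/2"]) (auto intro!: less_imp_le d)
qed

lemma orlicz_ge_linear:
  assumes "orlicz V" "\<bar>t\<bar> \<ge> 1"
  shows "\<bar>t\<bar> * V 1 \<le> V t"
proof -
  have cv: "convex_on UNIV V" and "V 0 = 0" and "V \<bar>t\<bar> = V t"
    using assms(1) by (auto simp: orlicz_def abs_if)
  have "V ((1 - 1/\<bar>t\<bar>) *\<^sub>R 0 + (1/\<bar>t\<bar>) *\<^sub>R \<bar>t\<bar>) \<le> (1 - 1/\<bar>t\<bar>) * V 0 + (1/\<bar>t\<bar>) * V \<bar>t\<bar>"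
    using assms(2) by (intro convex_onD[OF cv]) auto
  then show ?thesis
    using assms(2) \<open>V 0 = 0\<close> \<open>V \<bar>t\<bar> = V t\<close> by (auto simp: field_simps split: if_splits)
qed

lemma orlicz_ball_mono: "R \<le> R' \<Longrightarrow> orlicz_ball n V R \<subseteq> orlicz_ball n V R'"
  unfolding orlicz_ball_def by (auto intro: order_trans[OF _ mult_right_mono])

lemma sets_orlicz_ball:
  assumes "V \<in> borel_measurable borel"
  shows "orlicz_ball n V R \<in> sets (lebR n)"
proof -
  have "orlicz_ball n V R = {x \<in> space (lebR n). (\<Sum>i<n. V (x i)) \<le> R * real n}"
    by (simp add: orlicz_ball_def space_PiM)
  also have "\<dots> \<in> sets (lebR n)"
    using assms by measurable
  finally show ?thesis .
qed

lemma emeasure_PiM_cube: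
  assumes "0 \<le> d"
  shows "emeasure (lebR n) (PiE {..<n} (\<lambda>_. {-d..d})) = ennreal (2 * d) ^ n"
proof -
  interpret product_sigma_finite "\<lambda>_. lborel" by standard
  show ?thesis
    using assms by (subst emeasure_PiM) auto
qed

lemma emeasure_orlicz_ball_pos:
  assumes "orlicz V" "R > 0"
  shows "emeasure (lebR n) (orlicz_ball n V R) \<noteq> 0"
proof -
  obtain d where "d > 0" and d: "\<And>t. \<bar>t\<bar> \<le> d \<Longrightarrow> V t \<le> R"
    using orlicz_small_near_zero[OF assms] by blast
  have "PiE {..<n} (\<lambda>_. {-d..d}) \<subseteq> orlicz_ball n V R"
  proof
    fix x assume x: "x \<in> PiE {..<n} (\<lambda>_. {-d..d})"
    then have "(\<Sum>i<n. V (x i)) \<le> (\<Sum>i<n. R)"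
      by (intro sum_mono d) (force simp: PiE_iff abs_le_iff)
    then show "x \<in> orlicz_ball n V R"
      using x by (auto simp: orlicz_ball_def PiE_iff mult.commute)
  qed
  then have "emeasure (lebR n) (PiE {..<n} (\<lambda>_. {-d..d})) \<le> emeasure (lebR n) (orlicz_ball n V R)"
    by (intro emeasure_mono sets_orlicz_ball borel_measurable_orlicz assms(1))
  then have "ennreal (2 * d) ^ n \<le> emeasure (lebR n) (orlicz_ball n V R)"
    using emeasure_PiM_cube[of d n] \<open>d > 0\<close> by simp
  then show ?thesis
    using \<open>d > 0\<close> by (auto simp: ennreal_power[symmetric])
qed

lemma emeasure_orlicz_ball_finite:
  assumes "orlicz V"
  shows "emeasure (lebR n) (orlicz_ball n V R) \<noteq> \<infinity>"
proof -
  define b where "b = max 1 (R * real n / V 1)"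
  have "V 1 > 0"
    using assms by (simp add: orlicz_def)
  have "orlicz_ball n V R \<subseteq> PiE {..<n} (\<lambda>_. {-b..b})"
  proof
    fix x assume x: "x \<in> orlicz_ball n V R"
    have "\<bar>x i\<bar> \<le> b" if "i < n" for i
    proof (rule ccontr)
      assume "\<not> \<bar>x i\<bar> \<le> b"
      then have "\<bar>x i\<bar> \<ge> 1" and "R * real n / V 1 < \<bar>x i\<bar>"
        by (auto simp: b_def)
      then have "R * real n < \<bar>x i\<bar> * V 1"
        using \<open>V 1 > 0\<close> by (simp add: pos_divide_less_eq)
      also have "\<bar>x i\<bar> * V 1 \<le> V (x i)"
        using \<open>\<bar>x i\<bar> \<ge> 1\<close> by (rule orlicz_ge_linear[OF assms])
      also have "\<dots> \<le> (\<Sum>j<n. V (x j))"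
        using \<open>i < n\<close> by (intro member_le_sum orlicz_nonneg[OF assms]) auto
      finally show False
        using x by (simp add: orlicz_ball_def)
    qed
    then have "\<forall>i<n. -b \<le> x i \<and> x i \<le> b"
      by (metis abs_le_iff minus_le_iff)
    then show "x \<in> PiE {..<n} (\<lambda>_. {-b..b})"
      using x by (auto simp: orlicz_ball_def PiE_iff)
  qed
  then have "emeasure (lebR n) (orlicz_ball n V R) \<le> emeasure (lebR n) (PiE {..<n} (\<lambda>_. {-b..b}))"
    by (intro emeasure_mono) auto
  also have "\<dots> = ennreal (2 * b) ^ n"
    by (rule emeasure_PiM_cube) (simp add: b_def)
  also have "\<dots> < \<infinity>"
    by (simp add: power_less_top_ennreal)
  finally show ?thesis
    by simp
qed

lemma prob_space_unif_ball:
  assumes "orlicz V" "R > 0"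
  shows "prob_space (unif_ball n V R)"
  unfolding unif_ball_def
  by (intro prob_space_uniform_measure emeasure_orlicz_ball_pos emeasure_orlicz_ball_finite assms)

definition empirical_measure :: "nat \<Rightarrow> (nat \<Rightarrow> real) \<Rightarrow> real measure" where
  "empirical_measure n x = distr (measure_pmf (pmf_of_set {..<n})) borel x"

lemma sets_empirical_measure [simp]: "sets (empirical_measure n x) = sets borel"
  by (simp add: empirical_measure_def)

lemma prob_space_empirical_measure: "n > 0 \<Longrightarrow> prob_space (empirical_measure n x)"
  unfolding empirical_measure_def
  by (intro prob_space.prob_space_distr prob_space_measure_pmf) auto

lemma mV_empirical_measure:
  assumes "n > 0" "V \<in> borel_measurable borel" "\<And>t. 0 \<le> V t"
  shows "mV V (empirical_measure n x) = ennreal ((\<Sum>i<n. V (x i)) / real n)"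
proof -
  have "mV V (empirical_measure n x) = (\<integral>\<^sup>+ i. ennreal (V (x i)) \<partial>measure_pmf (pmf_of_set {..<n}))"
    unfolding mV_def empirical_measure_def using assms(2) by (subst nn_integral_distr) auto
  also have "\<dots> = (\<Sum>i<n. ennreal (V (x i))) / of_nat n"
    using assms(1) by (subst nn_integral_pmf_of_set) auto
  also have "\<dots> = ennreal ((\<Sum>i<n. V (x i)) / real n)"
    using assms by (simp add: sum_ennreal sum_nonneg divide_ennreal ennreal_of_nat_eq_real_of_nat)
  finally show ?thesis .
qed

lemma mV_le_Rtilde:
  assumes "prob_space \<nu>" "sets \<nu> = sets borel" "mV V1 \<nu> \<le> 1"
  shows "mV V2 \<nu> \<le> Rtilde V1 V2"
  unfolding Rtilde_def using assms by (intro SUP_upper) auto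

lemma Rtilde_pos:
  assumes "orlicz V1" "orlicz V2"
  shows "0 < Rtilde V1 V2"
proof -
  obtain d where "d > 0" and d: "\<And>t. \<bar>t\<bar> \<le> d \<Longrightarrow> V1 t \<le> 1"
    using orlicz_small_near_zero[OF assms(1) zero_less_one] by blast
  have mV_return: "mV V (return borel d) = ennreal (V d)" if "orlicz V" for V
    unfolding mV_def using borel_measurable_orlicz[OF that] by (simp add: nn_integral_return)
  have "mV V1 (return borel d) \<le> 1"
    using d[of d] \<open>d > 0\<close> by (simp add: mV_return[OF assms(1)])
  have "0 < V2 d"
    using assms(2) \<open>d > 0\<close> by (simp add: orlicz_def)
  then have "0 < mV V2 (return borel d)"
    by (simp add: mV_return[OF assms(2)])
  also have "\<dots> \<le> Rtilde V1 V2"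
    using \<open>mV V1 (return borel d) \<le> 1\<close> by (intro mV_le_Rtilde prob_space_return) auto
  finally show ?thesis .
qed

lemma orlicz_ball_subset_Rtilde:
  assumes "orlicz V1" "orlicz V2" "Rtilde V1 V2 \<le> ennreal R"
  shows "orlicz_ball n V1 1 \<subseteq> orlicz_ball n V2 R"
proof
  fix x assume x: "x \<in> orlicz_ball n V1 1"
  show "x \<in> orlicz_ball n V2 R"
  proof (cases "n = 0")
    case True
    then show ?thesis using x by (simp add: orlicz_ball_def)
  next
    case False
    have mV: "mV V (empirical_measure n x) = ennreal ((\<Sum>i<n. V (x i)) / real n)" if "orlicz V" for V
      using False by (intro mV_empirical_measure borel_measurable_orlicz orlicz_nonneg that) auto
    have "0 < ennreal R"
      using Rtilde_pos[OF assms(1,2)] assms(3) by (rule less_le_trans)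
    then have "R > 0"
      by simp
    have "(\<Sum>i<n. V1 (x i)) / real n \<le> 1"
      using x False by (simp add: orlicz_ball_def divide_le_eq)
    then have "mV V1 (empirical_measure n x) \<le> 1"
      by (simp add: mV[OF assms(1)] ennreal_le_1)
    then have "mV V2 (empirical_measure n x) \<le> Rtilde V1 V2"
      using False by (intro mV_le_Rtilde prob_space_empirical_measure) auto
    then have "mV V2 (empirical_measure n x) \<le> ennreal R"
      using assms(3) by (rule order_trans)
    then have "(\<Sum>i<n. V2 (x i)) / real n \<le> R"
      using \<open>R > 0\<close> by (simp add: mV[OF assms(2)])
    then show ?thesis
      using x False by (simp add: orlicz_ball_def divide_le_eq)
  qed
qed

lemma cond_prob_measure_AE_eq:
  assumes "prob_space P" "A \<in> sets P" "AE x in P. x \<in> A"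
  shows "cond_prob_measure P A = P"
proof -
  have "emeasure P A = 1"
    using assms by (intro prob_space.emeasure_eq_1_AE)
  then have "cond_prob_measure P A = density P (indicator A)"
    by (simp add: cond_prob_measure_def divide_ennreal_def)
  also have "\<dots> = density P (\<lambda>_. 1)"
    using assms(2,3) by (intro density_cong) auto
  finally show ?thesis
    by (simp add: density_1)
qed

lemma cond_prob_measure_unif_ball_superset:
  assumes "orlicz V" "R > 0" "orlicz_ball n V R \<subseteq> A" "A \<in> sets (lebR n)"
  shows "cond_prob_measure (unif_ball n V R) A = unif_ball n V R"
proof (rule cond_prob_measure_AE_eq)
  show "AE x in unif_ball n V R. x \<in> A"
    unfolding unif_ball_def using assms
    by (intro AE_uniform_measureI sets_orlicz_ball borel_measurable_orlicz) auto
qed (use assms prob_space_unif_ball in \<open>auto simp: unif_ball_def\<close>)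

lemma distk_eq_L2_set: "distk k x y = L2_set (\<lambda>i. x i - y i) {..<k}"
  by (simp add: distk_def L2_set_def)

lemma distk_commute: "distk k x y = distk k y x"
  by (simp add: distk_def power2_commute)

lemma distk_triangle: "distk k x z \<le> distk k x y + distk k y z"
proof -
  have "distk k x z = L2_set (\<lambda>i. (x i - y i) + (y i - z i)) {..<k}"
    by (simp add: distk_eq_L2_set)
  also have "\<dots> \<le> distk k x y + distk k y z"
    unfolding distk_eq_L2_set by (rule L2_set_triangle_ineq)
  finally show ?thesis .
qed

lemma borel_measurable_distk [measurable]: "distk k q \<in> borel_measurable (lebR k)"
  unfolding distk_def by measurable

lemma rational_point_near:
  assumes "\<delta> > 0"
  shows "\<exists>q \<in> PiE {..<k} (\<lambda>_. \<rat>). distk k x q < \<delta>"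
proof -
  define \<eta> where "\<eta> = \<delta> / (real k + 1)"
  have "\<eta> > 0"
    using assms by (simp add: \<eta>_def)
  have "\<forall>i. \<exists>r. r \<in> \<rat> \<and> x i < r \<and> r < x i + \<eta>"
    using Rats_dense_in_real \<open>\<eta> > 0\<close> by (meson less_add_same_cancel1)
  then have "\<exists>f. \<forall>i. f i \<in> \<rat> \<and> x i < f i \<and> f i < x i + \<eta>"
    by (rule choice)
  then obtain f where f_near: "\<forall>i. f i \<in> \<rat> \<and> x i < f i \<and> f i < x i + \<eta>"
    by blast
  have f: "f i \<in> \<rat>" "\<bar>x i - f i\<bar> \<le> \<eta>" for i
    using f_near[rule_format, of i] by (simp_all add: abs_le_iff)
  have "distk k x (restrict f {..<k}) = distk k x f"
    unfolding distk_def by (intro arg_cong[where f = sqrt] sum.cong) auto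
  also have "\<dots> \<le> (\<Sum>i<k. \<bar>x i - f i\<bar>)"
    unfolding distk_eq_L2_set by (rule L2_set_le_sum_abs)
  also have "\<dots> \<le> real k * \<eta>"
    using sum_mono[of "{..<k}" "\<lambda>i. \<bar>x i - f i\<bar>" "\<lambda>_. \<eta>"] f(2) by simp
  also have "\<dots> < \<delta>"
    using assms by (simp add: \<eta>_def field_simps)
  finally have "distk k x (restrict f {..<k}) < \<delta>" .
  moreover have "restrict f {..<k} \<in> PiE {..<k} (\<lambda>_. \<rat>)"
    using f(1) by simp
  ultimately show ?thesis
    by blast
qed

text \<open>The open e-neighbourhood of an arbitrary set is a union of balls with rational centres and
  radii, hence measurable.\<close>
lemma sets_distk_neighbourhood:
  assumes "e > 0"
  shows "{y \<in> space (lebR k). \<exists>x\<in>A. distk k x y < e} \<in> sets (lebR k)"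
proof -
  define Q where "Q = {(q, r) \<in> PiE {..<k} (\<lambda>_. \<rat>) \<times> \<rat>. \<exists>x\<in>A. distk k x q < r}"
  have "countable Q"
    by (rule countable_subset[of _ "PiE {..<k} (\<lambda>_. \<rat>) \<times> \<rat>"])
      (auto simp: Q_def intro!: countable_SIGMA countable_PiE countable_rat)
  have "{y \<in> space (lebR k). \<exists>x\<in>A. distk k x y < e} =
      (\<Union>(q, r)\<in>Q. {y \<in> space (lebR k). distk k q y < e - r})"
  proof (intro equalityI subsetI)
    fix y assume "y \<in> {y \<in> space (lebR k). \<exists>x\<in>A. distk k x y < e}"
    then obtain x where y: "y \<in> space (lebR k)" and "x \<in> A" and xy: "distk k x y < e"
      by auto
    obtain q where q: "q \<in> PiE {..<k} (\<lambda>_. \<rat>)" and xq: "distk k x q < (e - distk k x y) / 2"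
      using rational_point_near[of "(e - distk k x y) / 2" k x] xy by auto
    have "distk k x q < e - distk k q y"
      using distk_triangle[of k q y x] distk_commute[of k q x] xq by argo
    then obtain r where "r \<in> \<rat>" "distk k x q < r" and r: "r < e - distk k q y"
      using Rats_dense_in_real by blast
    then have "(q, r) \<in> Q"
      using q \<open>x \<in> A\<close> by (auto simp: Q_def)
    then show "y \<in> (\<Union>(q, r)\<in>Q. {y \<in> space (lebR k). distk k q y < e - r})"
      using y r by (intro UN_I[of "(q, r)"]) auto
  next
    fix y assume "y \<in> (\<Union>(q, r)\<in>Q. {y \<in> space (lebR k). distk k q y < e - r})"
    then obtain q r x where "y \<in> space (lebR k)" "x \<in> A" and qr: "distk k x q < r" "distk k q y < e - r"
      by (auto simp: Q_def)
    moreover have "distk k x y < e"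
      using distk_triangle[of k x y q] qr by linarith
    ultimately show "y \<in> {y \<in> space (lebR k). \<exists>x\<in>A. distk k x y < e}"
      by blast
  qed
  also have "\<dots> \<in> sets (lebR k)"
    using \<open>countable Q\<close> by (intro sets.countable_UN'') auto
  finally show ?thesis .
qed

lemma prokhorov_self:
  assumes "finite_measure \<mu>" "sets \<mu> = sets (lebR k)"
  shows "prokhorov k \<mu> \<mu> = 0"
proof -
  have "measure \<mu> A \<le> measure \<mu> {y \<in> space (lebR k). \<exists>x\<in>A. distk k x y < e} + e"
    if "e > 0" and A: "A \<in> sets (lebR k)" for e :: real and A
  proof -
    have "distk k x x < e" for x
      using \<open>e > 0\<close> by (simp add: distk_def)
    then have "A \<subseteq> {y \<in> space (lebR k). \<exists>x\<in>A. distk k x y < e}"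
      using sets.sets_into_space[OF A] by blast
    then have "measure \<mu> A \<le> measure \<mu> {y \<in> space (lebR k). \<exists>x\<in>A. distk k x y < e}"
      using assms sets_distk_neighbourhood[OF \<open>e > 0\<close>]
      by (intro finite_measure.finite_measure_mono) auto
    then show ?thesis
      using \<open>e > 0\<close> by simp
  qed
  then have "{e. e > 0 \<and> (\<forall>A \<in> sets (lebR k).
      measure \<mu> A \<le> measure \<mu> {y \<in> space (lebR k). \<exists>x\<in>A. distk k x y < e} + e \<and>
      measure \<mu> A \<le> measure \<mu> {y \<in> space (lebR k). \<exists>x\<in>A. distk k x y < e} + e)} = {0<..}"
    by auto
  then show ?thesis
    unfolding prokhorov_def by simp
qed

lemma measurable_restrict_lessThan: "(\<lambda>x. restrict x {..<k}) \<in> measurable (lebR n) (lebR k)"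
proof (rule measurable_restrict)
  fix i assume "i \<in> {..<k}"
  show "(\<lambda>x. x i) \<in> measurable (lebR n) lborel"
  proof (cases "i < n")
    case True
    then show ?thesis by simp
  next
    case False
    have "(\<lambda>x. undefined :: real) \<in> measurable (lebR n) lborel"
      by simp
    then show ?thesis
      by (rule measurable_cong[THEN iffD1, rotated])
        (use False in \<open>auto simp: space_PiM PiE_def extensional_def\<close>)
  qed
qed

lemma prob_space_first_coords:
  assumes "prob_space \<mu>" "sets \<mu> = sets (lebR n)"
  shows "prob_space (first_coords k \<mu>)"
  unfolding first_coords_def
  using measurable_restrict_lessThan measurable_cong_sets[OF assms(2) refl]
  by (intro prob_space.prob_space_distr[OF assms(1)]) blast

theorem mainTheorem8:
  fixes V1 V2 :: "real \<Rightarrow> real" and R :: real and k :: nat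
  assumes "orlicz V1" and "orlicz V2"
    and "filterlim (\<lambda>x. V1 x / V2 x) at_top at_infinity"
    and "Rtilde V1 V2 \<le> ennreal R"
  shows "\<exists>L :: real \<Rightarrow> real.
     (\<forall>\<epsilon>>0. (\<lambda>n. prokhorov k
         (first_coords k (cond_prob_measure (unif_ball n V1 1) (orlicz_ball n V2 (R + \<epsilon>))))
         (first_coords k (unif_ball n V1 1))) \<longlonglongrightarrow> L \<epsilon>)
     \<and> (L \<longlongrightarrow> 0) (at_right 0)"
proof (intro exI[of _ "\<lambda>_. 0"] conjI allI impI)
  fix \<epsilon> :: real assume "\<epsilon> > 0"
  have "cond_prob_measure (unif_ball n V1 1) (orlicz_ball n V2 (R + \<epsilon>)) = unif_ball n V1 1" for n
  proof (rule cond_prob_measure_unif_ball_superset)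
    show "orlicz_ball n V1 1 \<subseteq> orlicz_ball n V2 (R + \<epsilon>)"
      using orlicz_ball_subset_Rtilde[OF assms(1,2,4)] orlicz_ball_mono[of R "R + \<epsilon>"] \<open>\<epsilon> > 0\<close>
      by force
  qed (auto intro: assms sets_orlicz_ball borel_measurable_orlicz)
  moreover have "prokhorov k (first_coords k (unif_ball n V1 1)) (first_coords k (unif_ball n V1 1)) = 0"
    for n
    using prob_space_first_coords[OF prob_space_unif_ball[OF assms(1)]]
    by (intro prokhorov_self prob_space.axioms(1)) (auto simp: unif_ball_def first_coords_def)
  ultimately show "(\<lambda>n. prokhorov k
         (first_coords k (cond_prob_measure (unif_ball n V1 1) (orlicz_ball n V2 (R + \<epsilon>))))
         (first_coords k (unif_ball n V1 1))) \<longlonglongrightarrow> 0"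
    by simp
qed simp

end
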